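(* Let $\rho_0$ be a two-qubit state whose reduced state $\rho_B=\mathrm{Tr}_A[\rho_0]$ on Bob's side is of full rank, and let $$\rho=\frac{1}{4}\Big(\mathbb{1}\otimes\mathbb{1}+\vec{a}\cdot\vec{\sigma}\otimes \mathbb{1}+\sum_{i=x,y,z}T_{i}\,\sigma_{i}\otimes\sigma_{i}\Big)$$ be a canonical form of $\rho_0$ (as defined in the context), with $T=\mathrm{diag}(T_x,T_y,T_z)$. If $$\max_{\hat{x}\in\mathbb{R}^3,\ \|\hat x\|=1} \Big[(\vec{a}\cdot\hat{x})^2+2\,\|T\hat{x}\|\Big] \leq 1,$$ where $\|\cdot\|$ is the Euclidean norm, then $\rho$ is unsteerable from Alice to Bob for arbitrary projective measurements.
   Context: Notation: $\vec\sigma=(\sigma_x,\sigma_y,\sigma_z)$ are the Pauli matrices. Canonical form: given a two-qubit state $\rho_0$ with $\rho_B=\mathrm{Tr}_A\rho_0$ invertible, first form $\rho_1=(\mathbb{1}\otimes\rho_B^{-1/2})\rho_0(\mathbb{1}\otimes\rho_B^{-1/2})/\mathrm{Tr}[(\mathbb{1}\otimes\rho_B^{-1/2})\rho_0(\mathbb{1}\otimes\rho_B^{-1/2})]$, a two-qubit state whose Bob marginal is $\mathbb{1}/2$; then apply local unitaries $U_A\otimes U_B$ so that, in the expansion $\frac14(\mathbb{1}\otimes\mathbb{1}+\vec a\cdot\vec\sigma\otimes\mathbb{1}+\vec b\cdot\vec\sigma\,\otimes... )$ in the local Pauli basis, Bob's local Bloch vector is $0$ and the correlation matrix $T_{ij}=\mathrm{Tr}[\rho\,\sigma_i\otimes\sigma_j]$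 is diagonal; the resulting state $\rho$ has the displayed form. Steering: for a bipartite state $\rho$ and measurements on Alice's side given by POVMs $\{M_{a|x}\}_a$, the assemblage is $\sigma_{a|x}=\mathrm{Tr}_A[(M_{a|x}\otimes\mathbb{1})\rho]$. The state $\rho$ is unsteerable from Alice to Bob for projective measurements if there exist a family of positive semidefinite operators $\{\sigma_\lambda\}$ on Bob's qubit with $\int\mathrm{Tr}\,\sigma_\lambda\,d\lambda=1$ and, for every projective measurement $x$ of Alice (i.e. $M_{\pm|\hat x}=(\mathbb{1}\pm\hat x\cdot\vec\sigma)/2$ for any unit vector $\hat x$, together with trivial measurements) and outcome $a$, response probabilities $p(a|x,\lambda)\ge0$ with $\sum_a p(a|x,\lambda)=1$, such that $\sigma_{a|x}=\int \sigma_\lambda\,p(a|x,\lambda)\,d\lambda$ for all $a,x$ (a single local hidden state model for all projective measurements simultaneously). *)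

theory Defs
  imports "HOL-Analysis.Analysis"
begin

text \<open>Qubit operators: complex 2x2 matrices indexed by the two-element type 2.
  Two-qubit operators: complex matrices indexed by 2 \<times> 2 (first component = Alice,
  second component = Bob).\<close>

type_synonym qop = "complex^2^2"
type_synonym qqop = "complex^(2 \<times> 2)^(2 \<times> 2)"

definition cmat_scale :: "complex \<Rightarrow> complex^'n^'m \<Rightarrow> complex^'n^'m" where
  "cmat_scale c A = (\<chi> i j. c * A$i$j)"

definition adj :: "complex^'n^'m \<Rightarrow> complex^'m^'n" where
  "adj A = (\<chi> i j. cnj (A$j$i))"

definition hermitian :: "complex^'n^'n \<Rightarrow> bool" where
  "hermitian A \<longleftrightarrow> adj A = A"

definition psd :: "complex^'n^'n \<Rightarrow> bool" where
  "psd A \<longleftrightarrow> hermitian A \<and>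
     (\<forall>v::complex^'n. 0 \<le> Re (\<Sum>i\<in>UNIV. cnj (v$i) * (A *v v)$i))"

definition posdef :: "complex^'n^'n \<Rightarrow> bool" where
  "posdef A \<longleftrightarrow> hermitian A \<and>
     (\<forall>v::complex^'n. v \<noteq> 0 \<longrightarrow> 0 < Re (\<Sum>i\<in>UNIV. cnj (v$i) * (A *v v)$i))"

definition unitary :: "complex^'n^'n \<Rightarrow> bool" where
  "unitary U \<longleftrightarrow> adj U ** U = mat 1"

definition is_state :: "complex^'n^'n \<Rightarrow> bool" where
  "is_state \<rho> \<longleftrightarrow> psd \<rho> \<and> trace \<rho> = 1"

definition kron :: "qop \<Rightarrow> qop \<Rightarrow> qqop" where
  "kron A B = (\<chi> r c. A$(fst r)$(fst c) * B$(snd r)$(snd c))"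

definition ptraceA :: "qqop \<Rightarrow> qop" where
  "ptraceA \<rho> = (\<chi> j l. \<Sum>i\<in>UNIV. \<rho>$(i,j)$(i,l))"

text \<open>Pauli matrices, indexed by the type 3 (1 = x, 2 = y, 3 = z).\<close>
definition sigma_x :: qop where
  "sigma_x = (\<chi> r c. if r \<noteq> c then 1 else 0)"
definition sigma_y :: qop where
  "sigma_y = (\<chi> r c. if r = 1 \<and> c = 2 then - \<i> else if r = 2 \<and> c = 1 then \<i> else 0)"
definition sigma_z :: qop where
  "sigma_z = (\<chi> r c. if r = c then (if r = 1 then 1 else -1) else 0)"

definition pauli :: "3 \<Rightarrow> qop" where
  "pauli i = (if i = 1 then sigma_x else if i = 2 then sigma_y else sigma_z)"

definition pdot :: "real^3 \<Rightarrow> qop" where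
  "pdot n = (\<Sum>i\<in>UNIV. cmat_scale (complex_of_real (n$i)) (pauli i))"

definition canon_state :: "real^3 \<Rightarrow> real^3 \<Rightarrow> qqop" where
  "canon_state a T = cmat_scale (1/4)
     (mat 1 + kron (pdot a) (mat 1)
      + (\<Sum>i\<in>UNIV. cmat_scale (complex_of_real (T$i)) (kron (pauli i) (pauli i))))"

text \<open>rho is a canonical form of rho0: S = rho_B^{-1/2} (the positive definite matrix
  with S S rho_B = 1), rho1 = (1 \<otimes> S) rho0 (1 \<otimes> S) / Tr[...], and
  rho = (U_A \<otimes> U_B) rho1 (U_A \<otimes> U_B)^dagger for local unitaries.
  (That rho has the displayed form is imposed separately in the theorem.)\<close>
definition canonical_form_of :: "qqop \<Rightarrow> qqop \<Rightarrow> bool" where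
  "canonical_form_of \<rho>0 \<rho> \<longleftrightarrow>
     (\<exists>S UA UB :: qop.
        posdef S \<and> S ** S ** ptraceA \<rho>0 = mat 1 \<and> unitary UA \<and> unitary UB \<and>
        (let K = kron (mat 1) S; X = K ** \<rho>0 ** K; \<rho>1 = cmat_scale (1 / trace X) X;
             U = kron UA UB
         in \<rho> = U ** \<rho>1 ** adj U))"

definition proj_meas :: "real^3 \<Rightarrow> bool \<Rightarrow> qop" where
  "proj_meas x b = cmat_scale (1/2) (mat 1 + cmat_scale (if b then 1 else -1) (pdot x))"

definition assemblage :: "qqop \<Rightarrow> qop \<Rightarrow> qop" where
  "assemblage \<rho> M = ptraceA (kron M (mat 1) ** \<rho>)"

definition LHS_model_proj :: "(real^3) measure \<Rightarrow> (real^3 \<Rightarrow> qop) \<Rightarrow>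
     (real^3 \<Rightarrow> bool \<Rightarrow> real^3 \<Rightarrow> real) \<Rightarrow> qqop \<Rightarrow> bool" where
  "LHS_model_proj M \<sigma> p \<rho> \<longleftrightarrow>
     (\<forall>l\<in>space M. psd (\<sigma> l)) \<and>
     integrable M \<sigma> \<and>
     (LINT l|M. trace (\<sigma> l)) = 1 \<and>
     (\<forall>x b. \<forall>l\<in>space M. 0 \<le> p x b l) \<and>
     (\<forall>x. \<forall>l\<in>space M. p x True l + p x False l = 1) \<and>
     (\<forall>x b. norm x = 1 \<longrightarrow>
        integrable M (\<lambda>l. p x b l *\<^sub>R \<sigma> l) \<and>
        assemblage \<rho> (proj_meas x b) = (LINT l|M. p x b l *\<^sub>R \<sigma> l)) \<and>
     assemblage \<rho> (mat 1) = (LINT l|M. \<sigma> l)"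

definition unsteerable_proj :: "qqop \<Rightarrow> bool" where
  "unsteerable_proj \<rho> \<longleftrightarrow> (\<exists>M \<sigma> p. LHS_model_proj M \<sigma> p \<rho>)"

end

theory Submission
  imports Defs "HOL-Probability.Distribution_Functions"
begin

text \<open>
  Let the hidden variable \<lambda> be uniformly distributed in the unit ball of \<real>^3 and let Bob's
  hidden state be the pure state (1 + \<lambda>'\<cdot>\<sigma>)/2 along the direction \<lambda>' = \<lambda>/|\<lambda>|.
  For the measurement along x, Alice's assemblage element is ((1 \<plusminus> a\<cdot>x) 1 \<plusminus> (Tx)\<cdot>\<sigma>)/4,
  so a response function p(\<plusminus>|x,\<lambda>) reproduces it iff its mean is (1 \<plusminus> a\<cdot>x)/2 and
  its first moment \<integral> p \<lambda>' is \<plusminus>Tx/2. By Archimedes' hat-box theorem \<lambda>'\<cdot>u is uniform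
  on [-1,1] for every unit vector u. With u = Tx/|Tx| the response
  q [\<lambda>'\<cdot>u \<ge> -a\<cdot>x] + (1 - q)(1 + a\<cdot>x)/2 therefore has mean (1 + a\<cdot>x)/2 and first moment
  q (1 - (a\<cdot>x)^2)/4 u, which is Tx/2 for q = 2|Tx|/(1 - (a\<cdot>x)^2); the hypothesis of the
  theorem says precisely that this q lies in [0,1].
\<close>

section \<open>Operator algebra and the assemblage of the canonical state\<close>

lemma kron_mult: "kron A B ** kron C D = kron (A ** C) (B ** D)"
proof -
  have "(kron A B ** kron C D) $ r $ c = kron (A ** C) (B ** D) $ r $ c" for r c
  proof -
    have "(kron A B ** kron C D) $ r $ c = (\<Sum>k\<in>UNIV. \<Sum>l\<in>UNIV.
          A$(fst r)$k * B$(snd r)$l * (C$k$(fst c) * D$l$(snd c)))"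
      unfolding matrix_matrix_mult_def kron_def
      by (simp add: UNIV_Times_UNIV[symmetric] sum.cartesian_product split_beta del: UNIV_Times_UNIV)
    also have "\<dots> = (\<Sum>k\<in>UNIV. A$(fst r)$k * C$k$(fst c)) * (\<Sum>l\<in>UNIV. B$(snd r)$l * D$l$(snd c))"
      by (simp add: sum_product algebra_simps)
    finally show ?thesis by (simp add: kron_def matrix_matrix_mult_def)
  qed
  then show ?thesis by (simp add: vec_eq_iff)
qed

lemma kron_mat_1: "kron (mat 1) (mat 1) = mat 1"
  by (auto simp: kron_def vec_eq_iff mat_def prod_eq_iff)

lemma ptraceA_kron: "ptraceA (kron A B) = cmat_scale (trace A) B"
  by (simp add: ptraceA_def kron_def cmat_scale_def vec_eq_iff trace_def sum_distrib_right)

lemma ptraceA_add: "ptraceA (X + Y) = ptraceA X + ptraceA Y"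
  by (simp add: ptraceA_def vec_eq_iff sum.distrib)

lemma ptraceA_cmat_scale: "ptraceA (cmat_scale c X) = cmat_scale c (ptraceA X)"
  by (simp add: ptraceA_def vec_eq_iff cmat_scale_def sum_distrib_left)

lemma ptraceA_sum: "ptraceA (\<Sum>i\<in>S. f i) = (\<Sum>i\<in>S. ptraceA (f i))"
  by (induction S rule: infinite_finite_induct) (auto simp: ptraceA_add ptraceA_def vec_eq_iff sum.distrib)

lemma matrix_mult_cmat_scale: "A ** cmat_scale c B = cmat_scale c (A ** B)"
  by (simp add: matrix_matrix_mult_def cmat_scale_def vec_eq_iff sum_distrib_left algebra_simps)

lemma matrix_mult_sum: "A ** (\<Sum>i\<in>S. f i) = (\<Sum>i\<in>S. A ** f i)"
  by (induction S rule: infinite_finite_induct) (auto simp: matrix_add_ldistrib)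

lemma cmat_scale_cmat_scale: "cmat_scale c (cmat_scale d A) = cmat_scale (c * d) A"
  by (simp add: cmat_scale_def vec_eq_iff)

lemma cmat_scale_add_left: "cmat_scale c A + cmat_scale d A = cmat_scale (c + d) A"
  by (simp add: cmat_scale_def vec_eq_iff algebra_simps)

lemma assemblage_canon_state:
  "assemblage (canon_state a T) M =
     cmat_scale (1/4) (cmat_scale (trace M + trace (M ** pdot a)) (mat 1) +
       (\<Sum>i\<in>UNIV. cmat_scale (complex_of_real (T$i) * trace (M ** pauli i)) (pauli i)))"
proof -
  have "kron M (mat 1) ** canon_state a T =
      cmat_scale (1/4) (kron M (mat 1) + kron (M ** pdot a) (mat 1)
        + (\<Sum>i\<in>UNIV. cmat_scale (complex_of_real (T$i)) (kron (M ** pauli i) (pauli i))))"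
    unfolding canon_state_def
    by (simp add: matrix_mult_cmat_scale matrix_add_ldistrib matrix_mult_sum kron_mult
        kron_mat_1[symmetric] del: kron_mat_1)
  then show ?thesis
    unfolding assemblage_def
    by (simp add: ptraceA_add ptraceA_cmat_scale ptraceA_sum ptraceA_kron cmat_scale_cmat_scale
        cmat_scale_add_left)
qed

lemmas pauli_simps = pauli_def sigma_x_def sigma_y_def sigma_z_def

lemma pdot_entries:
  "pdot n $ 1 $ 1 = complex_of_real (n$3)"
  "pdot n $ 2 $ 2 = - complex_of_real (n$3)"
  "pdot n $ 1 $ 2 = Complex (n$1) (- n$2)"
  "pdot n $ 2 $ 1 = Complex (n$1) (n$2)"
  by (simp_all add: pdot_def sum_3 pauli_simps cmat_scale_def complex_eq_iff)

lemma trace_proj_meas: "trace (proj_meas x b) = 1"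
  by (simp add: trace_def sum_2 proj_meas_def cmat_scale_def mat_def pdot_entries) (simp add: field_simps)

lemma trace_proj_meas_pdot:
  "trace (proj_meas x b ** pdot a) = (if b then 1 else -1) * complex_of_real (a \<bullet> x)"
  by (simp add: trace_def sum_2 matrix_matrix_mult_def proj_meas_def cmat_scale_def mat_def
      pdot_entries inner_vec_def sum_3 complex_eq_iff algebra_simps) (simp add: field_simps)

lemma trace_proj_meas_pauli:
  "trace (proj_meas x b ** pauli i) = (if b then 1 else -1) * complex_of_real (x$i)"
  using exhaust_3[of i]
  by (elim disjE) (simp_all add: trace_def sum_2 matrix_matrix_mult_def proj_meas_def
      cmat_scale_def mat_def pdot_entries pauli_simps complex_eq_iff algebra_simps)

lemma trace_pauli: "trace (pauli i) = 0"
  using exhaust_3[of i] by (elim disjE) (simp_all add: trace_def sum_2 pauli_simps)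

section \<open>Qubit operators in Bloch form\<close>

definition bloch :: "real \<Rightarrow> real^3 \<Rightarrow> qop" where
  "bloch \<alpha> v = \<alpha> *\<^sub>R mat 1 + (\<Sum>i\<in>UNIV. v$i *\<^sub>R pauli i)"

lemma scaleR_qop_entry: "((r::real) *\<^sub>R (A::qop)) $ i $ j = complex_of_real r * A $ i $ j"
  by (simp only: vector_scaleR_component) (simp add: scaleR_conv_of_real)

lemma sum_qop_entry: "(\<Sum>k\<in>S. (f k :: qop)) $ i $ j = (\<Sum>k\<in>S. f k $ i $ j)"
  by (induction S rule: infinite_finite_induct) auto

lemma bloch_entries:
  "bloch \<alpha> v $ 1 $ 1 = complex_of_real (\<alpha> + v$3)"
  "bloch \<alpha> v $ 2 $ 2 = complex_of_real (\<alpha> - v$3)"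
  "bloch \<alpha> v $ 1 $ 2 = Complex (v$1) (- v$2)"
  "bloch \<alpha> v $ 2 $ 1 = Complex (v$1) (v$2)"
  by (simp_all add: bloch_def sum_qop_entry scaleR_qop_entry sum_3 pauli_simps mat_def complex_eq_iff)

lemma cmat_scale_eq_bloch:
  "cmat_scale (1/4) (cmat_scale (complex_of_real \<alpha>) (mat 1) +
     (\<Sum>i\<in>UNIV. cmat_scale (complex_of_real (v$i)) (pauli i))) = bloch (\<alpha>/4) (v /\<^sub>R 4)"
proof -
  have "cmat_scale (1/4) (cmat_scale (complex_of_real \<alpha>) (mat 1) +
     (\<Sum>i\<in>UNIV. cmat_scale (complex_of_real (v$i)) (pauli i))) $ r $ c = bloch (\<alpha>/4) (v /\<^sub>R 4) $ r $ c"
    for r c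
    using exhaust_2[of r] exhaust_2[of c]
    by (elim disjE) (simp_all add: bloch_entries cmat_scale_def sum_qop_entry sum_3 pauli_simps
        mat_def complex_eq_iff)
  then show ?thesis by (simp add: vec_eq_iff)
qed

lemma assemblage_proj_meas:
  "assemblage (canon_state a T) (proj_meas x b) =
     bloch ((1 + (if b then 1 else -1) * (a \<bullet> x)) / 4)
           (((if b then 1 else -1) / 4) *\<^sub>R (\<chi> i. T$i * x$i))"
proof -
  let ?s = "if b then 1 else -1 :: real"
  have "assemblage (canon_state a T) (proj_meas x b) =
      cmat_scale (1/4) (cmat_scale (complex_of_real (1 + ?s * (a \<bullet> x))) (mat 1) +
        (\<Sum>i\<in>UNIV. cmat_scale (complex_of_real ((?s *\<^sub>R (\<chi> i. T$i * x$i)) $ i)) (pauli i)))"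
    unfolding assemblage_canon_state trace_proj_meas trace_proj_meas_pdot trace_proj_meas_pauli
    by (cases b) (simp_all add: algebra_simps)
  also have "\<dots> = bloch ((1 + ?s * (a \<bullet> x)) / 4) ((?s *\<^sub>R (\<chi> i. T$i * x$i)) /\<^sub>R 4)"
    by (rule cmat_scale_eq_bloch)
  finally show ?thesis by simp
qed

lemma assemblage_mat_1: "assemblage (canon_state a T) (mat 1) = bloch (1/2) 0"
proof -
  have "trace (mat 1 :: qop) = 2" by (simp add: trace_def sum_2 mat_def)
  moreover have "trace (mat 1 ** pdot a) = 0" by (simp add: trace_def sum_2 pdot_entries)
  ultimately have "assemblage (canon_state a T) (mat 1) = cmat_scale (1/4)
      (cmat_scale (complex_of_real 2) (mat 1) + (\<Sum>i\<in>UNIV. cmat_scale (complex_of_real (0$i)) (pauli i)))"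
    unfolding assemblage_canon_state by (simp add: trace_pauli)
  also have "\<dots> = bloch (2/4) (0 /\<^sub>R 4)" by (rule cmat_scale_eq_bloch)
  finally show ?thesis by simp
qed

lemma bloch_form_nonneg:
  fixes \<alpha> v1 v2 v3 a b c d :: real
  assumes "v1\<^sup>2 + v2\<^sup>2 + v3\<^sup>2 \<le> \<alpha>\<^sup>2" "0 \<le> \<alpha>"
  shows "0 \<le> (\<alpha> + v3) * (a\<^sup>2 + b\<^sup>2) + (\<alpha> - v3) * (c\<^sup>2 + d\<^sup>2) + 2 * v1 * (a*c + b*d) + 2 * v2 * (a*d - b*c)"
    (is "0 \<le> ?Q")
proof (cases "\<alpha> + v3 = 0")
  case True
  then have "v3 = - \<alpha>" by simp
  then have "v1\<^sup>2 + v2\<^sup>2 \<le> 0" using assms(1) by simp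
  then have "v1\<^sup>2 = 0" "v2\<^sup>2 = 0" using zero_le_power2[of v1] zero_le_power2[of v2] by linarith+
  then show ?thesis using \<open>v3 = - \<alpha>\<close> assms(2) by simp
next
  case False
  have "v3\<^sup>2 \<le> \<alpha>\<^sup>2" using assms(1) zero_le_power2[of v1] zero_le_power2[of v2] by linarith
  then have "\<bar>v3\<bar> \<le> \<alpha>" using assms(2) power2_le_imp_le[of "\<bar>v3\<bar>" \<alpha>] by simp
  with False have s: "0 < \<alpha> + v3" by linarith
  \<comment> \<open>completing the square in (a, b)\<close>
  have "(\<alpha> + v3) * ?Q = ((\<alpha> + v3)*a + v1*c + v2*d)\<^sup>2 + ((\<alpha> + v3)*b + v1*d - v2*c)\<^sup>2
      + (\<alpha>\<^sup>2 - v3\<^sup>2 - v1\<^sup>2 - v2\<^sup>2) * (c\<^sup>2 + d\<^sup>2)"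
    by (simp add: power2_eq_square algebra_simps)
  also have "\<dots> \<ge> 0" using assms(1) by (intro add_nonneg_nonneg mult_nonneg_nonneg) auto
  finally show ?thesis using s by (simp add: zero_le_mult_iff)
qed

lemma norm3_square: "(norm (x::real^3))\<^sup>2 = (x$1)\<^sup>2 + (x$2)\<^sup>2 + (x$3)\<^sup>2"
  by (simp add: norm_vec_def L2_set_def sum_3 add_nonneg_nonneg)

lemma psd_bloch:
  assumes "norm v \<le> \<alpha>"
  shows "psd (bloch \<alpha> v)"
  unfolding psd_def hermitian_def
proof
  show "adj (bloch \<alpha> v) = bloch \<alpha> v"
    unfolding adj_def vec_eq_iff forall_2 by (simp add: bloch_entries complex_eq_iff)
  have sq: "(v$1)\<^sup>2 + (v$2)\<^sup>2 + (v$3)\<^sup>2 \<le> \<alpha>\<^sup>2"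
    using power_mono[OF assms norm_ge_zero] by (simp add: norm3_square[symmetric])
  have "0 \<le> \<alpha>" using assms norm_ge_zero order_trans by blast
  show "\<forall>x::complex^2. 0 \<le> Re (\<Sum>i\<in>UNIV. cnj (x $ i) * (bloch \<alpha> v *v x) $ i)"
  proof
    fix x :: "complex^2"
    have "Re (\<Sum>i\<in>UNIV. cnj (x $ i) * (bloch \<alpha> v *v x) $ i) =
      (\<alpha> + v$3) * ((Re (x$1))\<^sup>2 + (Im (x$1))\<^sup>2) + (\<alpha> - v$3) * ((Re (x$2))\<^sup>2 + (Im (x$2))\<^sup>2)
       + 2 * v$1 * (Re (x$1)*Re (x$2) + Im (x$1)*Im (x$2))
       + 2 * v$2 * (Re (x$1)*Im (x$2) - Im (x$1)*Re (x$2))"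
      by (simp add: sum_2 matrix_vector_mult_def bloch_entries power2_eq_square algebra_simps)
    then show "0 \<le> Re (\<Sum>i\<in>UNIV. cnj (x $ i) * (bloch \<alpha> v *v x) $ i)"
      using bloch_form_nonneg[OF sq \<open>0 \<le> \<alpha>\<close>] by simp
  qed
qed

lemma trace_bloch: "trace (bloch \<alpha> v) = complex_of_real (2 * \<alpha>)"
  by (simp add: trace_def sum_2 bloch_entries)

lemma scaleR_bloch: "r *\<^sub>R bloch \<alpha> v = bloch (r * \<alpha>) (r *\<^sub>R v)"
  by (simp add: bloch_def scaleR_add_right scaleR_sum_right)

lemma integrable_bloch:
  assumes "integrable M f" "\<And>i. integrable M (\<lambda>l. g l $ i)"
  shows "integrable M (\<lambda>l. bloch (f l) (g l))"
  unfolding bloch_def using assms by (intro Bochner_Integration.integrable_add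
      Bochner_Integration.integrable_sum integrable_scaleR_left) auto

lemma integral_bloch:
  assumes f: "integrable M f" and g: "\<And>i. integrable M (\<lambda>l. g l $ i)"
  shows "(\<integral>l. bloch (f l) (g l) \<partial>M) = bloch (integral\<^sup>L M f) (\<chi> i. \<integral>l. g l $ i \<partial>M)"
proof -
  have "(\<integral>l. bloch (f l) (g l) \<partial>M) =
      (\<integral>l. f l *\<^sub>R (mat 1 :: qop) \<partial>M) + (\<Sum>i\<in>UNIV. \<integral>l. g l $ i *\<^sub>R pauli i \<partial>M)"
    unfolding bloch_def using f g
    by (simp add: Bochner_Integration.integral_add Bochner_Integration.integral_sum
        Bochner_Integration.integrable_sum)
  moreover have "(\<integral>l. f l *\<^sub>R (mat 1 :: qop) \<partial>M) = integral\<^sup>L M f *\<^sub>R mat 1"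
    using f by simp
  moreover have "(\<integral>l. g l $ i *\<^sub>R pauli i \<partial>M) = (\<integral>l. g l $ i \<partial>M) *\<^sub>R pauli i" for i
    using g[of i] by simp
  ultimately show ?thesis by (simp add: bloch_def)
qed

section \<open>The uniform distribution on the unit ball\<close>

text \<open>For v = 0 the division by zero makes reflection 0 the identity.\<close>

definition reflection :: "'a::real_inner \<Rightarrow> 'a \<Rightarrow> 'a" where
  "reflection v x = x - (2 * (x \<bullet> v) / (v \<bullet> v)) *\<^sub>R v"

lemma reflection_self_adjoint: "reflection v x \<bullet> y = x \<bullet> reflection v y"
  by (simp add: reflection_def inner_diff_left inner_diff_right algebra_simps inner_commute)

lemma reflection_reflection: "reflection v (reflection v x) = x"
  by (cases "v = 0") (simp_all add: reflection_def inner_diff_left algebra_simps)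

lemma orthogonal_transformation_reflection: "orthogonal_transformation (reflection v)"
  unfolding orthogonal_transformation_def
proof safe
  show "linear (reflection v)"
    by (rule linearI) (simp_all add: reflection_def inner_add_left algebra_simps add_divide_distrib)
  show "reflection v x \<bullet> reflection v y = x \<bullet> y" for x y
    by (simp add: reflection_self_adjoint reflection_reflection)
qed

lemma reflection_self: "reflection v v = - v"
  by (cases "v = 0") (simp_all add: reflection_def scaleR_2)

lemma reflection_orthogonal: "x \<bullet> v = 0 \<Longrightarrow> reflection v x = x"
  by (simp add: reflection_def)

lemma reflection_axis_component:
  fixes x :: "real^'n"
  shows "reflection (axis i 1) x $ i = - (x $ i)"
  by (simp add: reflection_def inner_axis inner_real_def)

lemma sgn_orthogonal_transformation:
  "orthogonal_transformation Q \<Longrightarrow> sgn (Q x) = Q (sgn x)"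
  by (simp add: sgn_div_norm orthogonal_transformation_norm orthogonal_transformation_linear linear_scale)

lemma borel_measurable_orthogonal_transformation:
  fixes Q :: "'a::euclidean_space \<Rightarrow> 'a"
  assumes "orthogonal_transformation Q"
  shows "Q \<in> borel_measurable borel"
  using assms by (intro borel_measurable_continuous_onI linear_continuous_on
      linear_conv_bounded_linear[THEN iffD1] orthogonal_transformation_linear)

lemma borel_measurable_vec_nth [measurable]: "(\<lambda>x::real^'n. x $ i) \<in> borel_measurable borel"
  by (intro borel_measurable_continuous_onI continuous_intros)

definition ball_measure :: "(real^'n::{finite,wellorder}) measure" where
  "ball_measure = uniform_measure lborel (cball 0 1)"

lemma emeasure_unit_cball_pos: "emeasure lborel (cball 0 1 :: 'a::euclidean_space set) \<noteq> 0"
  by (simp add: emeasure_cball) (metis less_irrefl unit_ball_vol_pos of_nat_0_le_iff)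

lemma emeasure_unit_cball_finite: "emeasure lborel (cball 0 1 :: 'a::euclidean_space set) \<noteq> \<infinity>"
  by (simp add: emeasure_cball)

lemma prob_space_ball_measure: "prob_space ball_measure"
  unfolding ball_measure_def
  by (rule prob_space_uniform_measure[OF emeasure_unit_cball_pos emeasure_unit_cball_finite])

interpretation ball_measure: prob_space ball_measure
  by (rule prob_space_ball_measure)

lemma sets_ball_measure [simp, measurable_cong]: "sets ball_measure = sets borel"
  and space_ball_measure [simp]: "space ball_measure = UNIV"
  by (simp_all add: ball_measure_def)

lemma measure_ball_measure:
  fixes X :: "(real, 'n::{finite,wellorder}) vec set"
  assumes "X \<in> sets borel"
  shows "measure ball_measure X = measure lborel (cball 0 1 \<inter> X) / measure lborel (cball 0 1 :: (real, 'n) vec set)"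
  unfolding ball_measure_def using assms
  by (simp add: measure_uniform_measure[OF emeasure_unit_cball_pos emeasure_unit_cball_finite])

lemma distr_ball_measure_orthogonal:
  fixes Q :: "(real, 'n::{finite,wellorder}) vec \<Rightarrow> (real, 'n) vec"
  assumes Q: "orthogonal_transformation Q"
  shows "distr ball_measure borel Q = ball_measure"
proof (rule measure_eqI)
  have Qm: "Q \<in> borel_measurable borel" by (rule borel_measurable_orthogonal_transformation[OF Q])
  show "sets (distr ball_measure borel Q) = sets ball_measure" by simp
  fix X assume "X \<in> sets (distr ball_measure borel Q)"
  then have X: "X \<in> sets borel" by simp
  let ?S = "cball 0 1 \<inter> X"
  have "?S \<in> lmeasurable"
    using X emeasure_unit_cball_finite
    by (intro fmeasurableI) (auto simp: emeasure_completion less_top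
        intro!: order.strict_trans1[OF emeasure_mono[of ?S "cball 0 1"]])
  have "cball 0 1 \<inter> Q -` X = Q -` ?S"
    by (auto simp: orthogonal_transformation_norm[OF Q])
  also have "\<dots> = inv Q ` ?S"
    by (rule bij_vimage_eq_inv_image[OF orthogonal_transformation_bij[OF Q]])
  finally have preimage: "cball 0 1 \<inter> Q -` X = inv Q ` ?S" .
  have "measure lborel (cball 0 1 \<inter> Q -` X) = measure lborel ?S"
  proof -
    have "measure lebesgue (inv Q ` ?S) = measure lebesgue ?S"
      by (rule measure_orthogonal_image[OF orthogonal_transformation_inv[OF Q] \<open>?S \<in> lmeasurable\<close>])
    moreover have "Q -` X \<in> sets borel" using Qm X by (simp add: measurable_sets_borel)
    ultimately show ?thesis unfolding preimage[symmetric] using X by simp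
  qed
  then have "measure (distr ball_measure borel Q) X = measure ball_measure X"
    using Qm X by (simp add: measure_distr measure_ball_measure measurable_sets_borel)
  moreover have "finite_measure (distr ball_measure borel Q)"
    using Qm by (intro prob_space.finite_measure ball_measure.prob_space_distr) simp
  ultimately show "emeasure (distr ball_measure borel Q) X = emeasure ball_measure X"
    by (simp add: finite_measure.emeasure_eq_measure ball_measure.emeasure_eq_measure)
qed

lemma measure_ball_measure_orthogonal_vimage:
  fixes Q :: "(real, 'n::{finite,wellorder}) vec \<Rightarrow> (real, 'n) vec"
  assumes Q: "orthogonal_transformation Q" and X: "X \<in> sets borel"
  shows "measure ball_measure (Q -` X) = measure ball_measure X"
proof -
  have "Q \<in> borel_measurable borel" by (rule borel_measurable_orthogonal_transformation[OF Q])
  then have "measure ball_measure (Q -` X) = measure (distr ball_measure borel Q) X"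
    using X by (simp add: measure_distr)
  then show ?thesis by (simp add: distr_ball_measure_orthogonal[OF Q])
qed

lemma integral_ball_measure_orthogonal:
  fixes Q :: "(real, 'n::{finite,wellorder}) vec \<Rightarrow> (real, 'n) vec" and f :: "(real, 'n) vec \<Rightarrow> real"
  assumes Q: "orthogonal_transformation Q" and f: "f \<in> borel_measurable borel"
  shows "(\<integral>x. f (Q x) \<partial>ball_measure) = integral\<^sup>L ball_measure f"
proof -
  have "Q \<in> borel_measurable borel" by (rule borel_measurable_orthogonal_transformation[OF Q])
  then have "integral\<^sup>L (distr ball_measure borel Q) f = (\<integral>x. f (Q x) \<partial>ball_measure)"
    using f by (intro integral_distr) auto
  then show ?thesis by (simp add: distr_ball_measure_orthogonal[OF Q])
qed

lemma integral_ball_measure_odd: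
  fixes Q :: "(real, 'n::{finite,wellorder}) vec \<Rightarrow> (real, 'n) vec" and f :: "(real, 'n) vec \<Rightarrow> real"
  assumes "orthogonal_transformation Q" "f \<in> borel_measurable borel" "\<And>x. f (Q x) = - f x"
  shows "integral\<^sup>L ball_measure f = 0"
  using integral_ball_measure_orthogonal[OF assms(1,2)] by (simp add: assms(3))

lemma integrable_ball_measure_bounded:
  fixes f :: "(real, 'n::{finite,wellorder}) vec \<Rightarrow> real"
  assumes "f \<in> borel_measurable borel" "\<And>l. \<bar>f l\<bar> \<le> B"
  shows "integrable ball_measure f"
  using assms by (intro ball_measure.integrable_const_bound[of _ B]) auto

lemma abs_sgn_inner_le: "\<bar>sgn l \<bullet> v\<bar> \<le> norm v"
  using Cauchy_Schwarz_ineq2[of "sgn l" v] norm_sgn[of l] by (cases "l = 0") auto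

lemma abs_sgn_component_le: "\<bar>sgn l $ i\<bar> \<le> (1::real)"
  using component_le_norm_cart[of "sgn l" i] by (cases "l = 0") (auto simp: norm_sgn)

section \<open>Archimedes' hat-box theorem\<close>

text \<open>Fubini's theorem is available for binary products, so volumes in \<real>^3 are computed
  in real \<times> real \<times> real and transported back.\<close>

definition vec3_to_triple :: "real^3 \<Rightarrow> real \<times> real \<times> real" where
  "vec3_to_triple l = (l$1, l$2, l$3)"

lemma vec3_to_triple_measurable [measurable]: "vec3_to_triple \<in> borel_measurable borel"
  unfolding vec3_to_triple_def by measurable

lemma norm_vec3_to_triple: "norm (vec3_to_triple l) = norm l"
  by (simp add: vec3_to_triple_def norm_Pair norm_vec_def L2_set_def sum_3 add.assoc)

lemma Basis_triple: "(Basis :: (real \<times> real \<times> real) set) = {(1,0,0), (0,1,0), (0,0,1)}"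
  by (auto simp: Basis_prod_def zero_prod_def)

lemma vimage_vec3_to_triple_box:
  "vec3_to_triple -` box l u =
     box (vector [fst l, fst (snd l), snd (snd l)]) (vector [fst u, fst (snd u), snd (snd u)])"
proof (rule set_eqI)
  fix x :: "real^3"
  have "x \<in> vec3_to_triple -` box l u \<longleftrightarrow>
      (fst l < x$1 \<and> x$1 < fst u) \<and> (fst (snd l) < x$2 \<and> x$2 < fst (snd u)) \<and>
      (snd (snd l) < x$3 \<and> x$3 < snd (snd u))"
    by (simp add: mem_box Basis_triple inner_prod_def vec3_to_triple_def)
  then show "x \<in> vec3_to_triple -` box l u \<longleftrightarrow>
      x \<in> box (vector [fst l, fst (snd l), snd (snd l)]) (vector [fst u, fst (snd u), snd (snd u)])"
    by (simp add: mem_box_cart forall_3 vector_3)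
qed

lemma emeasure_lborel_box_vec3:
  fixes p q :: "real^3"
  assumes "p$1 \<le> q$1" "p$2 \<le> q$2" "p$3 \<le> q$3"
  shows "emeasure lborel (box p q) = ennreal ((q$1 - p$1) * (q$2 - p$2) * (q$3 - p$3))"
proof -
  have "emeasure lborel (box p q) = emeasure lborel (cbox p q)"
    by (simp add: emeasure_lborel_box_eq emeasure_lborel_cbox_eq)
  also have "\<dots> = ennreal (measure lborel (cbox p q))"
    by (simp add: emeasure_eq_measure2 emeasure_lborel_cbox_finite)
  also have "measure lborel (cbox p q) = (\<Prod>i\<in>UNIV. q$i - p$i)"
  proof (rule content_cbox_cart)
    have "\<forall>i. p$i \<le> q$i" using assms exhaust_3 by metis
    then show "cbox p q \<noteq> {}" by (auto simp: interval_ne_empty_cart)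
  qed
  finally show ?thesis
    unfolding UNIV_3 by (simp add: mult.assoc mult.commute mult.left_commute)
qed

lemma distr_lborel_vec3_to_triple: "distr lborel borel vec3_to_triple = lborel"
proof (rule lborel_eqI[symmetric])
  fix l u :: "real \<times> real \<times> real"
  assume lu: "\<And>b. b \<in> Basis \<Longrightarrow> l \<bullet> b \<le> u \<bullet> b"
  have le: "fst l \<le> fst u" "fst (snd l) \<le> fst (snd u)" "snd (snd l) \<le> snd (snd u)"
    using lu[of "(1,0,0)"] lu[of "(0,1,0)"] lu[of "(0,0,1)"] by (auto simp: Basis_triple inner_prod_def)
  have "emeasure (distr lborel borel vec3_to_triple) (box l u) = emeasure lborel (vec3_to_triple -` box l u)"
    by (simp add: emeasure_distr)
  also have "\<dots> = ennreal ((fst u - fst l) * (fst (snd u) - fst (snd l)) * (snd (snd u) - snd (snd l)))"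
    unfolding vimage_vec3_to_triple_box using le by (subst emeasure_lborel_box_vec3) (auto simp: vector_3)
  also have "\<dots> = (\<Prod>b\<in>Basis. (u - l) \<bullet> b)"
    by (simp add: Basis_triple inner_prod_def mult.assoc)
  finally show "emeasure (distr lborel borel vec3_to_triple) (box l u) = (\<Prod>b\<in>Basis. (u - l) \<bullet> b)" .
qed simp

definition spherical_sector :: "real \<Rightarrow> (real \<times> real \<times> real) set" where
  "spherical_sector c = {e \<in> cball 0 1. c \<le> fst e / norm e}"

lemma spherical_sector_sets [measurable]: "spherical_sector c \<in> sets borel"
proof -
  have m: "(\<lambda>e::real \<times> real \<times> real. fst e / norm e) \<in> borel_measurable borel"
    by (intro borel_measurable_divide borel_measurable_continuous_onI continuous_intros)
  have "spherical_sector c = cball 0 1 \<inter> (\<lambda>e. fst e / norm e) -` {c..}"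
    by (auto simp: spherical_sector_def)
  also have "\<dots> \<in> sets borel"
    using measurable_sets[OF m, of "{c..}"] by (intro sets.Int) auto
  finally show ?thesis .
qed

lemma le_div_sqrt_sum_squares_iff:
  fixes c z \<rho> :: real
  assumes c: "0 < c" "c < 1"
  shows "c \<le> z / sqrt (z\<^sup>2 + \<rho>\<^sup>2) \<longleftrightarrow> 0 < z \<and> \<rho>\<^sup>2 \<le> z\<^sup>2 * (1 - c\<^sup>2) / c\<^sup>2"
proof -
  have "c \<le> z / sqrt (z\<^sup>2 + \<rho>\<^sup>2) \<longleftrightarrow> 0 < z \<and> c\<^sup>2 * \<rho>\<^sup>2 \<le> z\<^sup>2 * (1 - c\<^sup>2)"
  proof
    assume h: "c \<le> z / sqrt (z\<^sup>2 + \<rho>\<^sup>2)"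
    then have s: "0 < sqrt (z\<^sup>2 + \<rho>\<^sup>2)"
      using c by (cases "sqrt (z\<^sup>2 + \<rho>\<^sup>2) = 0") (auto simp: add_nonneg_nonneg order_less_le)
    then have cz: "c * sqrt (z\<^sup>2 + \<rho>\<^sup>2) \<le> z" using h by (simp add: pos_le_divide_eq)
    moreover have "0 < c * sqrt (z\<^sup>2 + \<rho>\<^sup>2)" using c s by simp
    ultimately have "0 < z" by linarith
    have "(c * sqrt (z\<^sup>2 + \<rho>\<^sup>2))\<^sup>2 \<le> z\<^sup>2" using cz c s by (intro power_mono) auto
    then show "0 < z \<and> c\<^sup>2 * \<rho>\<^sup>2 \<le> z\<^sup>2 * (1 - c\<^sup>2)"
      using \<open>0 < z\<close> by (simp add: power_mult_distrib algebra_simps)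
  next
    assume h: "0 < z \<and> c\<^sup>2 * \<rho>\<^sup>2 \<le> z\<^sup>2 * (1 - c\<^sup>2)"
    have s: "0 < sqrt (z\<^sup>2 + \<rho>\<^sup>2)" using h by (simp add: add_pos_nonneg)
    have "(c * sqrt (z\<^sup>2 + \<rho>\<^sup>2))\<^sup>2 \<le> z\<^sup>2"
      using h by (simp add: power_mult_distrib algebra_simps)
    then have "c * sqrt (z\<^sup>2 + \<rho>\<^sup>2) \<le> z" by (rule power2_le_imp_le) (use h in simp)
    then show "c \<le> z / sqrt (z\<^sup>2 + \<rho>\<^sup>2)" using s by (simp add: pos_le_divide_eq)
  qed
  also have "\<dots> \<longleftrightarrow> 0 < z \<and> \<rho>\<^sup>2 \<le> z\<^sup>2 * (1 - c\<^sup>2) / c\<^sup>2"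
    using c by (simp add: pos_le_divide_eq mult.commute)
  finally show ?thesis .
qed

lemma spherical_sector_slice_iff:
  fixes c z \<rho> :: real
  assumes c: "0 < c" "c < 1"
  shows "(z\<^sup>2 + \<rho>\<^sup>2 \<le> 1 \<and> c \<le> z / sqrt (z\<^sup>2 + \<rho>\<^sup>2)) \<longleftrightarrow>
         (0 < z \<and> z \<le> 1 \<and> \<rho>\<^sup>2 \<le> (if z \<le> c then z\<^sup>2 * (1 - c\<^sup>2) / c\<^sup>2 else 1 - z\<^sup>2))"
proof -
  have "z\<^sup>2 * (1 - c\<^sup>2) / c\<^sup>2 \<le> 1 - z\<^sup>2 \<longleftrightarrow> z\<^sup>2 * (1 - c\<^sup>2) \<le> (1 - z\<^sup>2) * c\<^sup>2"
    using c by (intro pos_divide_le_eq) simp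
  also have "\<dots> \<longleftrightarrow> z\<^sup>2 \<le> c\<^sup>2" by (simp add: algebra_simps)
  finally have radii: "z\<^sup>2 * (1 - c\<^sup>2) / c\<^sup>2 \<le> 1 - z\<^sup>2 \<longleftrightarrow> z\<^sup>2 \<le> c\<^sup>2" .
  show ?thesis
  proof (cases "0 < z")
    case True
    show ?thesis
    proof (cases "z \<le> c")
      case le: True
      then have "z\<^sup>2 \<le> c\<^sup>2" using True by (intro power_mono) auto
      then show ?thesis
        unfolding le_div_sqrt_sum_squares_iff[OF c] using True le c radii by auto
    next
      case gt: False
      then have "\<not> z\<^sup>2 \<le> c\<^sup>2" using c by (simp add: power2_le_iff_abs_le)
      moreover have "z \<le> 1" if "z\<^sup>2 + \<rho>\<^sup>2 \<le> 1"
        using that True power2_le_imp_le[of z 1] zero_le_power2[of \<rho>] by simp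
      ultimately show ?thesis
        unfolding le_div_sqrt_sum_squares_iff[OF c] using True gt radii zero_le_power2[of \<rho>] by auto
    qed
  qed (simp add: le_div_sqrt_sum_squares_iff[OF c])
qed

lemma vimage_Pair_spherical_sector:
  assumes c: "0 < c" "c < 1"
  shows "Pair z -` spherical_sector c =
    (if 0 < z \<and> z \<le> 1 then cball 0 (sqrt (if z \<le> c then z\<^sup>2 * (1 - c\<^sup>2) / c\<^sup>2 else 1 - z\<^sup>2)) else {})"
proof -
  define m where "m = (if z \<le> c then z\<^sup>2 * (1 - c\<^sup>2) / c\<^sup>2 else 1 - z\<^sup>2)"
  have sq: "(norm w)\<^sup>2 \<le> m \<longleftrightarrow> norm w \<le> sqrt m" for w :: "real \<times> real"
  proof
    assume "norm w \<le> sqrt m"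
    moreover from this have "0 \<le> sqrt m" using norm_ge_zero order_trans by blast
    then have "0 \<le> m" by simp
    ultimately show "(norm w)\<^sup>2 \<le> m" using power_mono[of "norm w" "sqrt m" 2] by simp
  qed (rule real_le_rsqrt)
  have "(z, w) \<in> spherical_sector c \<longleftrightarrow> 0 < z \<and> z \<le> 1 \<and> norm w \<le> sqrt m" for w
  proof -
    have "(z, w) \<in> spherical_sector c \<longleftrightarrow>
        z\<^sup>2 + (norm w)\<^sup>2 \<le> 1 \<and> c \<le> z / sqrt (z\<^sup>2 + (norm w)\<^sup>2)"
      by (simp add: spherical_sector_def norm_Pair)
    also have "\<dots> \<longleftrightarrow> 0 < z \<and> z \<le> 1 \<and> (norm w)\<^sup>2 \<le> m"
      unfolding m_def by (rule spherical_sector_slice_iff[OF c])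
    finally show ?thesis by (simp add: sq)
  qed
  then show ?thesis by (auto simp: m_def)
qed

lemma sector_slice_area_has_integral:
  assumes c: "0 < c" "c < 1"
  shows "((\<lambda>z. pi * (if z \<le> c then z\<^sup>2 * (1 - c\<^sup>2) / c\<^sup>2 else 1 - z\<^sup>2)) has_integral
          (2 * pi / 3 * (1 - c))) {0..1}"
proof -
  let ?f = "\<lambda>z. pi * (if z \<le> c then z\<^sup>2 * (1 - c\<^sup>2) / c\<^sup>2 else 1 - z\<^sup>2)"
  define k where "k = pi * (1 - c\<^sup>2) / c\<^sup>2"
  have "((\<lambda>z. k * z\<^sup>2) has_integral (k * c ^ 3 / 3 - k * 0 ^ 3 / 3)) {0..c}"
    using c by (intro fundamental_theorem_of_calculus)
      (auto intro!: derivative_eq_intros simp: has_real_derivative_iff_has_vector_derivative[symmetric])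
  moreover have "k * c ^ 3 / 3 - k * 0 ^ 3 / 3 = pi * (1 - c\<^sup>2) * c / 3"
    using c by (simp add: k_def power2_eq_square power3_eq_cube)
  ultimately have "((\<lambda>z. k * z\<^sup>2) has_integral (pi * (1 - c\<^sup>2) * c / 3)) {0..c}" by simp
  then have lower: "(?f has_integral (pi * (1 - c\<^sup>2) * c / 3)) {0..c}"
    by (rule has_integral_eq[rotated]) (simp add: k_def)
  have "((\<lambda>z. pi * (1 - z\<^sup>2)) has_integral (pi * (1 - 1 ^ 3 / 3) - pi * (c - c ^ 3 / 3))) {c..1}"
    using c by (intro fundamental_theorem_of_calculus)
      (auto intro!: derivative_eq_intros simp: has_real_derivative_iff_has_vector_derivative[symmetric])
  moreover have "pi * (1 - 1 ^ 3 / 3) - pi * (c - c ^ 3 / 3) = pi * (2/3 - c + c ^ 3 / 3)"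
    by (simp add: algebra_simps)
  ultimately have "((\<lambda>z. pi * (1 - z\<^sup>2)) has_integral (pi * (2/3 - c + c ^ 3 / 3))) {c..1}" by simp
  then have upper: "(?f has_integral (pi * (2/3 - c + c ^ 3 / 3))) {c..1}"
    by (rule has_integral_eq[rotated]) (use c in \<open>auto simp: antisym_conv\<close>)
  have "(?f has_integral (pi * (1 - c\<^sup>2) * c / 3 + pi * (2/3 - c + c ^ 3 / 3))) {0..1}"
    using c by (intro has_integral_combine[OF _ _ lower upper]) auto
  moreover have "pi * (1 - c\<^sup>2) * c / 3 + pi * (2/3 - c + c ^ 3 / 3) = 2 * pi / 3 * (1 - c)"
    by (simp add: field_simps power2_eq_square power3_eq_cube)
  ultimately show ?thesis by simp
qed

lemma emeasure_spherical_sector: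
  assumes c: "0 < c" "c < 1"
  shows "emeasure lborel (spherical_sector c) = ennreal (2 * pi / 3 * (1 - c))"
proof -
  define g where "g z = (if z \<le> c then z\<^sup>2 * (1 - c\<^sup>2) / c\<^sup>2 else 1 - z\<^sup>2)" for z
  have g_nonneg: "0 \<le> g z" if "0 \<le> z" "z \<le> 1" for z
    using that c power_mono[of z 1 2] power_mono[of c 1 2] by (auto simp: g_def)
  have disk: "emeasure lborel (cball (0::real \<times> real) (sqrt m)) = ennreal (pi * m)" if "0 \<le> m" for m
    using emeasure_cball[of "sqrt m" "0::real \<times> real"] unit_ball_vol_even[of 1] that
    by (simp add: power2_eq_square)
  have slice: "emeasure lborel (Pair z -` spherical_sector c) = ennreal (pi * g z) * indicator {0..1} z"
    for z
    using g_nonneg[of z] c by (cases "z = 0") (auto simp: vimage_Pair_spherical_sector[OF c] disk g_def)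
  have "emeasure lborel (spherical_sector c) = emeasure (lborel \<Otimes>\<^sub>M lborel) (spherical_sector c)"
    by (simp add: lborel_prod)
  also have "\<dots> = (\<integral>\<^sup>+z. emeasure lborel (Pair z -` spherical_sector c) \<partial>lborel)"
    by (rule lborel.emeasure_pair_measure_alt)
      (use spherical_sector_sets[of c] in \<open>simp only: lborel_prod sets_lborel\<close>)
  also have "\<dots> = (\<integral>\<^sup>+z. ennreal (pi * g z) * indicator {0..1} z \<partial>lborel)"
    by (simp add: slice)
  also have "\<dots> = ennreal (2 * pi / 3 * (1 - c))"
  proof (rule nn_integral_has_integral_lebesgue')
    show "0 \<le> pi * g z" if "z \<in> {0..1}" for z using g_nonneg that by simp
    show "((\<lambda>z. pi * g z) has_integral 2 * pi / 3 * (1 - c)) {0..1}"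
      unfolding g_def by (rule sector_slice_area_has_integral[OF c])
  qed
  finally show ?thesis .
qed

lemma measure_lborel_unit_cball_vec3: "measure lborel (cball 0 1 :: (real^3) set) = 4 * pi / 3"
  by (simp add: measure_def emeasure_cball eval_unit_ball_vol)

lemma measure_ball_measure_sgn_ge:
  assumes c: "0 < c" "c < 1"
  shows "measure (ball_measure :: (real^3) measure) {l. c \<le> sgn l $ 1} = (1 - c) / 2"
proof -
  have "measure ball_measure {l::real^3. c \<le> sgn l $ 1} =
      measure lborel (cball 0 1 \<inter> {l::real^3. c \<le> sgn l $ 1}) / measure lborel (cball 0 1 :: (real^3) set)"
    by (rule measure_ball_measure) measurable
  also have "cball 0 1 \<inter> {l::real^3. c \<le> sgn l $ 1} = vec3_to_triple -` spherical_sector c"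
    by (auto simp: spherical_sector_def norm_vec3_to_triple sgn_div_norm divide_inverse mult.commute)
      (simp_all add: vec3_to_triple_def)
  also have "measure lborel (vec3_to_triple -` spherical_sector c) = measure lborel (spherical_sector c)"
    by (subst distr_lborel_vec3_to_triple[symmetric]) (simp add: measure_distr)
  also have "\<dots> = 2 * pi / 3 * (1 - c)"
    using emeasure_spherical_sector[OF c] c by (simp add: measure_def)
  finally show ?thesis by (simp add: measure_lborel_unit_cball_vec3)
qed

lemma measure_ball_measure_sgn_le:
  "measure ball_measure {l::real^3. sgn l $ 1 \<le> - c} = measure ball_measure {l::real^3. c \<le> sgn l $ 1}"
proof -
  let ?R = "reflection (axis 1 1) :: real^3 \<Rightarrow> real^3"
  have X: "{l::real^3. sgn l $ 1 \<le> - c} \<in> sets borel" by measurable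
  have "measure ball_measure (?R -` {l. sgn l $ 1 \<le> - c}) = measure ball_measure {l::real^3. sgn l $ 1 \<le> - c}"
    using measure_ball_measure_orthogonal_vimage[OF orthogonal_transformation_reflection X] .
  moreover have "?R -` {l. sgn l $ 1 \<le> - c} = {l. c \<le> sgn l $ 1}"
    by (auto simp: sgn_orthogonal_transformation[OF orthogonal_transformation_reflection]
        reflection_axis_component)
  ultimately show ?thesis by simp
qed

lemma measure_ball_measure_sgn_gt:
  assumes c: "0 < c" "c < 1"
  shows "measure ball_measure {l::real^3. c < sgn l $ 1} = (1 - c) / 2"
proof (rule antisym)
  show "measure ball_measure {l::real^3. c < sgn l $ 1} \<le> (1 - c) / 2"
    unfolding measure_ball_measure_sgn_ge[OF c, symmetric]
    by (intro ball_measure.finite_measure_mono) auto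
  show "(1 - c) / 2 \<le> measure ball_measure {l::real^3. c < sgn l $ 1}"
  proof (rule dense_le_bounded[of 0])
    fix w :: real assume w: "0 < w" "w < (1 - c) / 2"
    then have "measure ball_measure {l::real^3. 1 - 2 * w \<le> sgn l $ 1} = w"
      using c by (subst measure_ball_measure_sgn_ge) auto
    moreover have "measure ball_measure {l::real^3. 1 - 2 * w \<le> sgn l $ 1} \<le>
        measure ball_measure {l::real^3. c < sgn l $ 1}"
      using w by (intro ball_measure.finite_measure_mono) auto
    ultimately show "w \<le> measure ball_measure {l::real^3. c < sgn l $ 1}" by simp
  qed (use c in simp)
qed

lemma real_distribution_uniform_pm1: "real_distribution (uniform_measure lborel {-1..1::real})"
  by (auto simp: real_distribution_def real_distribution_axioms_def intro!: prob_space_uniform_measure)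

lemma cdf_uniform_pm1:
  "cdf (uniform_measure lborel {-1..1}) c = (if c < -1 then 0 else if c \<le> 1 then (1 + c) / 2 else 1)"
proof -
  have "cdf (uniform_measure lborel {-1..1}) c = measure lborel ({-1..1} \<inter> {..c}) / 2"
    by (simp add: cdf_def)
  moreover have "{-1..1} \<inter> {..c} = (if c < -1 then {} else {-1..min 1 c})" by auto
  ultimately show ?thesis by (auto simp: min_def)
qed

lemma cdf_eq_at_right:
  assumes "real_distribution M" "real_distribution N"
    and "\<forall>\<^sub>F d in at_right c. cdf M d = cdf N d"
  shows "cdf M c = cdf N c"
proof -
  have "(cdf M \<longlongrightarrow> cdf M c) (at_right c)" "(cdf N \<longlongrightarrow> cdf N c) (at_right c)"
    using assms(1,2)[THEN real_distribution.finite_borel_measure_M,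
        THEN finite_borel_measure.cdf_is_right_cont] by (simp_all add: continuous_within)
  moreover from this(1) have "(cdf N \<longlongrightarrow> cdf M c) (at_right c)"
    by (rule tendsto_cong[THEN iffD1, rotated]) (use assms(3) in simp)
  ultimately show ?thesis by (intro tendsto_unique) auto
qed

lemma measure_ball_measure_sgn_atMost:
  fixes c :: real
  assumes "c \<noteq> -1" "c \<noteq> 0"
  shows "measure ball_measure {l::real^3. sgn l $ 1 \<le> c} = cdf (uniform_measure lborel {-1..1}) c"
proof -
  have bound: "-1 \<le> sgn l $ 1" "sgn l $ 1 \<le> 1" for l :: "real^3"
    using abs_sgn_component_le[of l 1] by simp_all
  have "c < -1 \<or> (-1 < c \<and> c < 0) \<or> (0 < c \<and> c < 1) \<or> 1 \<le> c" using assms by linarith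
  then consider "c < -1" | "-1 < c" "c < 0" | "0 < c" "c < 1" | "1 \<le> c" by blast
  then show ?thesis
  proof cases
    case 1
    then have "{l::real^3. sgn l $ 1 \<le> c} = {}"
      using bound(1) by (auto simp: not_le intro: less_le_trans)
    then show ?thesis using 1 by (simp add: cdf_uniform_pm1)
  next
    case 2
    then show ?thesis
      using measure_ball_measure_sgn_le[of "- c"] measure_ball_measure_sgn_ge[of "- c"]
      by (simp add: cdf_uniform_pm1)
  next
    case 3
    have "{l::real^3. sgn l $ 1 \<le> c} = space ball_measure - {l. c < sgn l $ 1}" by auto
    moreover have "{l::real^3. c < sgn l $ 1} \<in> sets ball_measure" by measurable
    ultimately have "measure ball_measure {l::real^3. sgn l $ 1 \<le> c} = 1 - (1 - c) / 2"
      using 3 by (simp add: ball_measure.prob_compl measure_ball_measure_sgn_gt del: space_ball_measure)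
    then show ?thesis using 3 by (simp add: cdf_uniform_pm1 field_simps)
  next
    case 4
    then have "{l::real^3. sgn l $ 1 \<le> c} = space ball_measure"
      using bound(2) by (auto intro: order_trans)
    then show ?thesis using 4 ball_measure.prob_space by (simp add: cdf_uniform_pm1 del: space_ball_measure)
  qed
qed

lemma distr_sgn_component_ball_measure:
  "distr ball_measure borel (\<lambda>l::real^3. sgn l $ 1) = uniform_measure lborel {-1..1}"
  (is "?D = ?U")
proof (rule cdf_unique)
  have "(\<lambda>l::real^3. sgn l $ 1) \<in> borel_measurable ball_measure" by measurable
  then show D: "real_distribution ?D"
    by (auto simp: real_distribution_def real_distribution_axioms_def intro!: ball_measure.prob_space_distr)
  show U: "real_distribution ?U" by (rule real_distribution_uniform_pm1)
  have off_gaps: "cdf ?D c = cdf ?U c" if "c \<noteq> -1" "c \<noteq> 0" for c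
    using measure_ball_measure_sgn_atMost[OF that] by (simp add: cdf_def measure_distr vimage_def Int_def)
  show "cdf ?D = cdf ?U"
  proof
    fix c
    show "cdf ?D c = cdf ?U c"
    proof (cases "c = -1 \<or> c = 0")
      case True
      have "\<forall>\<^sub>F d in at_right c. cdf ?D d = cdf ?U d"
        using eventually_at_right_real[of c "c + 1/2"] True
        by (auto elim!: eventually_mono intro!: off_gaps)
      then show ?thesis by (rule cdf_eq_at_right[OF D U])
    qed (auto intro: off_gaps)
  qed
qed

lemma distr_sgn_inner_ball_measure:
  fixes u :: "real^3"
  assumes u: "norm u = 1"
  shows "distr ball_measure borel (\<lambda>l::real^3. sgn l \<bullet> u) = uniform_measure lborel {-1..1}"
proof -
  obtain R :: "real^3 \<Rightarrow> real^3" where R: "orthogonal_transformation R" "R u = axis 1 1"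
    by (rule orthogonal_transformation_exists_1[OF u, of "axis 1 1 :: real^3"]) auto
  have R_meas: "R \<in> borel_measurable borel"
    by (rule borel_measurable_orthogonal_transformation[OF R(1)])
  have "sgn (R l) $ 1 = sgn l \<bullet> u" for l
  proof -
    have "sgn (R l) $ 1 = R (sgn l) \<bullet> R u"
      by (simp add: R sgn_orthogonal_transformation inner_axis)
    also have "\<dots> = sgn l \<bullet> u"
      using R(1) by (simp add: orthogonal_transformation_def)
    finally show ?thesis .
  qed
  then have "distr ball_measure borel (\<lambda>l::real^3. sgn l \<bullet> u) =
      distr (distr ball_measure borel R) borel (\<lambda>l. sgn l $ 1)"
    using R_meas by (subst distr_distr) (auto simp: comp_def)
  then show ?thesis
    by (simp add: distr_ball_measure_orthogonal[OF R(1)] distr_sgn_component_ball_measure)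
qed

section \<open>Integrals over a uniformly random direction\<close>

lemma integral_ball_measure_sgn_inner:
  fixes u :: "real^3" and g :: "real \<Rightarrow> real"
  assumes "norm u = 1" "g \<in> borel_measurable borel"
  shows "(\<integral>l. g (sgn l \<bullet> u) \<partial>ball_measure) = integral\<^sup>L (uniform_measure lborel {-1..1}) g"
  using assms by (simp add: distr_sgn_inner_ball_measure[symmetric] integral_distr)

lemma integral_uniform_pm1_indicator:
  fixes c :: real
  assumes "-1 \<le> c" "c \<le> 1"
  shows "integral\<^sup>L (uniform_measure lborel {-1..1}) (indicator {c..} :: real \<Rightarrow> real) = (1 - c) / 2"
proof -
  have "{-1..1} \<inter> {c..} = {c..1::real}" using assms by auto
  then show ?thesis using assms by (simp add: Int_commute)
qed

lemma integral_uniform_pm1_indicator_id: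
  fixes c :: real
  assumes "-1 \<le> c" "c \<le> 1"
  shows "(\<integral>s. indicator {c..} s * s \<partial>uniform_measure lborel {-1..1}) = (1 - c\<^sup>2) / 4"
proof -
  have "(\<integral>s. indicator {c..} s * s \<partial>uniform_measure lborel {-1..1}) =
      (\<integral>s. (indicator {-1..1} s / 2) *\<^sub>R (indicator {c..} s * s) \<partial>lborel)"
  proof -
    have dens: "uniform_measure lborel {-1..1::real} = density lborel (\<lambda>s. ennreal (indicator {-1..1} s / 2))"
      unfolding uniform_measure_def
      by (intro arg_cong2[where f=density] refl ext)
        (auto simp: divide_ennreal[symmetric] split: split_indicator)
    show ?thesis unfolding dens by (rule integral_density) auto
  qed
  also have "\<dots> = (\<integral>s. indicator {c..1} s *\<^sub>R (s / 2) \<partial>lborel)"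
    using assms by (intro Bochner_Integration.integral_cong) (auto split: split_indicator)
  also have "\<dots> = 1\<^sup>2 / 4 - c\<^sup>2 / 4"
    by (rule integral_FTC_atLeastAtMost[OF assms(2)]) (auto intro!: derivative_eq_intros
        continuous_intros simp: has_real_derivative_iff_has_vector_derivative[symmetric])
  finally show ?thesis by (simp add: diff_divide_distrib)
qed

lemma integral_ball_measure_sgn_inner_zero:
  "(\<integral>l. sgn l \<bullet> w \<partial>ball_measure) = (0::real)"
proof (rule integral_ball_measure_odd[OF orthogonal_transformation_reflection])
  show "(\<lambda>l. sgn l \<bullet> w) \<in> borel_measurable borel" by measurable
  show "sgn (reflection w l) \<bullet> w = - (sgn l \<bullet> w)" for l
    by (simp add: sgn_orthogonal_transformation[OF orthogonal_transformation_reflection]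
        reflection_self_adjoint reflection_self)
qed

lemma integrable_sgn_component: "integrable ball_measure (\<lambda>l. sgn l $ i :: real)"
  by (rule integrable_ball_measure_bounded[OF _ abs_sgn_component_le]) measurable

lemma integral_sgn_component: "(\<integral>l. sgn l $ i \<partial>ball_measure) = (0::real)"
  using integral_ball_measure_sgn_inner_zero[of "axis i 1"] by (simp add: inner_axis)

lemma integrable_sgn_inner: "integrable ball_measure (\<lambda>l::real^3. sgn l \<bullet> v)"
  by (rule integrable_ball_measure_bounded[OF _ abs_sgn_inner_le]) measurable

lemma integrable_cap_sgn_inner:
  "integrable ball_measure (\<lambda>l::real^3. indicator {c..} (sgn l \<bullet> u) * (sgn l \<bullet> v))"
  using abs_sgn_inner_le[of _ v] by (intro integrable_ball_measure_bounded[of _ "norm v"])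
    (auto simp: abs_mult split: split_indicator)

lemma integral_ball_measure_cap:
  fixes u :: "real^3"
  assumes "norm u = 1" "-1 \<le> c" "c \<le> 1"
  shows "(\<integral>l. indicator {c..} (sgn l \<bullet> u) \<partial>ball_measure) = (1 - c) / 2"
  using integral_ball_measure_sgn_inner[OF assms(1), of "indicator {c..}"]
    integral_uniform_pm1_indicator[OF assms(2,3)] by simp

lemma integral_ball_measure_cap_inner:
  fixes u w :: "real^3"
  assumes u: "norm u = 1" and c: "-1 \<le> c" "c \<le> 1"
  shows "(\<integral>l. indicator {c..} (sgn l \<bullet> u) * (sgn l \<bullet> w) \<partial>ball_measure) = (1 - c\<^sup>2) / 4 * (u \<bullet> w)"
proof -
  \<comment> \<open>split w into its components along and orthogonal to u; the orthogonal part
    integrates to zero by the reflection in it, which fixes u\<close>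
  define w' where "w' = w - (u \<bullet> w) *\<^sub>R u"
  have "u \<bullet> u = 1" using u by (simp add: dot_square_norm)
  then have w': "u \<bullet> w' = 0" by (simp add: w'_def inner_diff_right)
  let ?cap = "\<lambda>l::real^3. indicator {c..} (sgn l \<bullet> u) :: real"
  have "(\<integral>l. ?cap l * (sgn l \<bullet> w') \<partial>ball_measure) = 0"
  proof (rule integral_ball_measure_odd[OF orthogonal_transformation_reflection])
    show "(\<lambda>l. ?cap l * (sgn l \<bullet> w')) \<in> borel_measurable borel" by measurable
    have "reflection w' x \<bullet> u = x \<bullet> u" "reflection w' x \<bullet> w' = - (x \<bullet> w')" for x
      using w' by (simp_all add: reflection_self_adjoint reflection_self reflection_orthogonal)
    then show "?cap (reflection w' l) * (sgn (reflection w' l) \<bullet> w') = - (?cap l * (sgn l \<bullet> w'))" for l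
      by (simp add: sgn_orthogonal_transformation[OF orthogonal_transformation_reflection])
  qed
  moreover have "(\<integral>l. ?cap l * (sgn l \<bullet> u) \<partial>ball_measure) = (1 - c\<^sup>2) / 4"
    using integral_ball_measure_sgn_inner[OF u, of "\<lambda>s. indicator {c..} s * s"]
      integral_uniform_pm1_indicator_id[OF c] by simp
  moreover note integrable_cap_sgn_inner[of c u]
  moreover have "?cap l * (sgn l \<bullet> w) = (u \<bullet> w) * (?cap l * (sgn l \<bullet> u)) + ?cap l * (sgn l \<bullet> w')" for l
    by (simp add: w'_def inner_diff_right algebra_simps)
  ultimately show ?thesis by simp
qed

section \<open>The local hidden state model\<close>

definition lhs_state :: "real^3 \<Rightarrow> qop" where
  "lhs_state l = bloch (1/2) (sgn l /\<^sub>R 2)"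

lemma psd_lhs_state: "psd (lhs_state l)"
  unfolding lhs_state_def by (rule psd_bloch) (cases "l = 0"; simp add: norm_sgn)

lemma trace_lhs_state: "trace (lhs_state l) = 1"
  by (simp add: lhs_state_def trace_bloch)

lemma integral_lhs_state:
  "integrable ball_measure lhs_state" "integral\<^sup>L ball_measure lhs_state = bloch (1/2) 0"
proof -
  have lhs: "lhs_state = (\<lambda>l. bloch (1/2) (sgn l /\<^sub>R 2))" by (simp add: lhs_state_def fun_eq_iff)
  have f: "integrable ball_measure (\<lambda>_::real^3. 1/2 :: real)" by simp
  have g: "integrable ball_measure (\<lambda>l::real^3. (sgn l /\<^sub>R 2) $ i)" for i
    using integrable_sgn_component[of i] by simp
  show "integrable ball_measure lhs_state" unfolding lhs by (rule integrable_bloch[OF f g])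
  have "(\<chi> i. \<integral>l. (sgn l /\<^sub>R 2) $ i \<partial>ball_measure) = (0 :: real^3)"
    by (simp add: vec_eq_iff integral_sgn_component)
  then show "integral\<^sup>L ball_measure lhs_state = bloch (1/2) 0"
    unfolding lhs integral_bloch[OF f g] by (simp add: ball_measure.prob_space del: space_ball_measure)
qed

text \<open>If |a\<cdot>x| = 1 the hypothesis forces Tx = 0, and division by zero makes the weight 0.\<close>

definition steering_weight :: "real^3 \<Rightarrow> real^3 \<Rightarrow> real^3 \<Rightarrow> real" where
  "steering_weight a T x = 2 * norm (\<chi> i. T$i * x$i) / (1 - (a \<bullet> x)\<^sup>2)"

definition steering_axis :: "real^3 \<Rightarrow> real^3 \<Rightarrow> real^3" where
  "steering_axis T x = (if (\<chi> i. T$i * x$i) = 0 then axis 1 1 else sgn (\<chi> i. T$i * x$i))"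

definition response_plus :: "real^3 \<Rightarrow> real^3 \<Rightarrow> real^3 \<Rightarrow> real^3 \<Rightarrow> real" where
  "response_plus a T x l =
     steering_weight a T x * indicator {- (a \<bullet> x)..} (sgn l \<bullet> steering_axis T x) +
     (1 - steering_weight a T x) * ((1 + a \<bullet> x) / 2)"

text \<open>Only unit vectors x are measurements; for the others any normalised response will do.\<close>

definition lhs_response :: "real^3 \<Rightarrow> real^3 \<Rightarrow> real^3 \<Rightarrow> bool \<Rightarrow> real^3 \<Rightarrow> real" where
  "lhs_response a T x b l =
     (if norm x = 1 then if b then response_plus a T x l else 1 - response_plus a T x l else 1/2)"

lemma norm_steering_axis: "norm (steering_axis T x) = 1"
  by (simp add: steering_axis_def norm_sgn)

lemma steering_weight_bounds:
  assumes "(a \<bullet> x)\<^sup>2 + 2 * norm (\<chi> i. T$i * x$i) \<le> 1"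
  shows "0 \<le> steering_weight a T x" "steering_weight a T x \<le> 1" "\<bar>a \<bullet> x\<bar> \<le> 1"
proof -
  have le: "2 * norm (\<chi> i. T$i * x$i) \<le> 1 - (a \<bullet> x)\<^sup>2" using assms by simp
  moreover have "0 \<le> 2 * norm (\<chi> i. T$i * x$i)" by simp
  ultimately show "0 \<le> steering_weight a T x"
    unfolding steering_weight_def by (intro divide_nonneg_nonneg) linarith+
  show "steering_weight a T x \<le> 1"
  proof -
    have "(a \<bullet> x)\<^sup>2 \<le> 1" using le norm_ge_zero[of "\<chi> i. T$i * x$i"] by linarith
    then show ?thesis using le by (auto simp: steering_weight_def divide_le_eq_1)
  qed
  show "\<bar>a \<bullet> x\<bar> \<le> 1"
    using assms power2_le_imp_le[of "\<bar>a \<bullet> x\<bar>" 1] norm_ge_zero[of "\<chi> i. T$i * x$i"] by simp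
qed

lemma steering_weight_scaleR_axis:
  assumes "(a \<bullet> x)\<^sup>2 + 2 * norm (\<chi> i. T$i * x$i) \<le> 1"
  shows "(steering_weight a T x * (1 - (a \<bullet> x)\<^sup>2) / 4) *\<^sub>R steering_axis T x = (\<chi> i. T$i * x$i) /\<^sub>R 2"
proof (cases "(\<chi> i. T$i * x$i) = 0")
  case False
  then have "0 < 1 - (a \<bullet> x)\<^sup>2" using assms by (smt (verit) zero_less_norm_iff)
  then show ?thesis
    using False by (simp add: steering_weight_def steering_axis_def sgn_div_norm)
qed (simp add: steering_weight_def)

lemma response_plus_bounds:
  assumes "(a \<bullet> x)\<^sup>2 + 2 * norm (\<chi> i. T$i * x$i) \<le> 1"
  shows "0 \<le> response_plus a T x l" "response_plus a T x l \<le> 1"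
proof -
  note w = steering_weight_bounds[OF assms]
  let ?w = "steering_weight a T x"
    and ?i = "indicator {- (a \<bullet> x)..} (sgn l \<bullet> steering_axis T x) :: real"
  have m: "0 \<le> (1 + a \<bullet> x) / 2" "(1 + a \<bullet> x) / 2 \<le> 1" using w(3) by auto
  have i: "0 \<le> ?i" "?i \<le> 1" by (simp_all split: split_indicator)
  show "0 \<le> response_plus a T x l"
    unfolding response_plus_def using w i m by (intro add_nonneg_nonneg mult_nonneg_nonneg) auto
  have "?w * ?i + (1 - ?w) * ((1 + a \<bullet> x) / 2) \<le> ?w * 1 + (1 - ?w) * 1"
    using w i m by (intro add_mono mult_left_mono) auto
  then show "response_plus a T x l \<le> 1" by (simp add: response_plus_def)
qed

lemma response_plus_measurable [measurable]: "response_plus a T x \<in> borel_measurable borel"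
  unfolding response_plus_def by measurable

lemma integral_response_plus:
  assumes H: "(a \<bullet> x)\<^sup>2 + 2 * norm (\<chi> i. T$i * x$i) \<le> 1"
  shows "integral\<^sup>L ball_measure (response_plus a T x) = (1 + a \<bullet> x) / 2"
    and "(\<integral>l. response_plus a T x l * (sgn l \<bullet> v) \<partial>ball_measure) = (\<chi> i. T$i * x$i) \<bullet> v / 2"
proof -
  note w = steering_weight_bounds[OF H]
  let ?w = "steering_weight a T x" and ?u = "steering_axis T x"
  let ?cap = "\<lambda>l. indicator {- (a \<bullet> x)..} (sgn l \<bullet> ?u) :: real"
  have c: "-1 \<le> - (a \<bullet> x)" "- (a \<bullet> x) \<le> 1" using w(3) by auto
  have int_cap: "integrable ball_measure ?cap"
    by (rule integrable_ball_measure_bounded[of _ 1]) (auto split: split_indicator)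
  have "integral\<^sup>L ball_measure (response_plus a T x) =
      ?w * ((1 - - (a \<bullet> x)) / 2) + (1 - ?w) * ((1 + a \<bullet> x) / 2)"
    unfolding response_plus_def using int_cap
    by (simp add: integral_ball_measure_cap[OF norm_steering_axis c] ball_measure.prob_space
        del: space_ball_measure)
  then show "integral\<^sup>L ball_measure (response_plus a T x) = (1 + a \<bullet> x) / 2"
    by (simp add: field_simps)
  have "(\<integral>l. response_plus a T x l * (sgn l \<bullet> v) \<partial>ball_measure) =
      ?w * (\<integral>l. ?cap l * (sgn l \<bullet> v) \<partial>ball_measure) +
      (1 - ?w) * ((1 + a \<bullet> x) / 2) * (\<integral>l. sgn l \<bullet> v \<partial>ball_measure)"
    unfolding response_plus_def distrib_right
    using integrable_cap_sgn_inner[of "- (a \<bullet> x)" ?u v] integrable_sgn_inner[of v]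
    by (simp add: mult.assoc)
  also have "\<dots> = ((?w * (1 - (a \<bullet> x)\<^sup>2) / 4) *\<^sub>R ?u) \<bullet> v"
    by (simp add: integral_ball_measure_cap_inner[OF norm_steering_axis c]
        integral_ball_measure_sgn_inner_zero)
  finally show "(\<integral>l. response_plus a T x l * (sgn l \<bullet> v) \<partial>ball_measure) = (\<chi> i. T$i * x$i) \<bullet> v / 2"
    by (simp add: steering_weight_scaleR_axis[OF H])
qed

lemma integral_lhs_response:
  assumes H: "(a \<bullet> x)\<^sup>2 + 2 * norm (\<chi> i. T$i * x$i) \<le> 1" and x: "norm x = 1"
  shows "integrable ball_measure (lhs_response a T x b)"
    and "integrable ball_measure (\<lambda>l. lhs_response a T x b l * (sgn l \<bullet> v))"
    and "integral\<^sup>L ball_measure (lhs_response a T x b) = (1 + (if b then 1 else -1) * (a \<bullet> x)) / 2"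
    and "(\<integral>l. lhs_response a T x b l * (sgn l \<bullet> v) \<partial>ball_measure) =
           (if b then 1 else -1) * ((\<chi> i. T$i * x$i) \<bullet> v) / 2"
proof -
  have int_plus: "integrable ball_measure (response_plus a T x)"
    using response_plus_bounds[OF H] by (intro integrable_ball_measure_bounded[of _ 1]) auto
  have "\<bar>response_plus a T x l * (sgn l \<bullet> v)\<bar> \<le> 1 * norm v" for l
    unfolding abs_mult using response_plus_bounds[OF H, of l] abs_sgn_inner_le[of l v]
    by (intro mult_mono) auto
  then have int_plus_inner: "integrable ball_measure (\<lambda>l. response_plus a T x l * (sgn l \<bullet> v))"
    by (intro integrable_ball_measure_bounded[of _ "1 * norm v"]) auto
  note int_inner = integrable_sgn_inner[of v]
  have resp: "lhs_response a T x b =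
      (\<lambda>l. if b then response_plus a T x l else 1 - response_plus a T x l)"
    by (simp add: lhs_response_def x fun_eq_iff)
  show "integrable ball_measure (lhs_response a T x b)"
    unfolding resp using int_plus by (cases b) simp_all
  show "integrable ball_measure (\<lambda>l. lhs_response a T x b l * (sgn l \<bullet> v))"
    unfolding resp using int_plus_inner int_inner by (cases b) (simp_all add: left_diff_distrib)
  show "integral\<^sup>L ball_measure (lhs_response a T x b) = (1 + (if b then 1 else -1) * (a \<bullet> x)) / 2"
    unfolding resp using int_plus integral_response_plus(1)[OF H]
    by (cases b) (simp_all add: ball_measure.prob_space field_simps del: space_ball_measure)
  show "(\<integral>l. lhs_response a T x b l * (sgn l \<bullet> v) \<partial>ball_measure) =
      (if b then 1 else -1) * ((\<chi> i. T$i * x$i) \<bullet> v) / 2"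
    unfolding resp using int_plus_inner int_inner integral_response_plus(2)[OF H, of v]
    by (cases b) (simp_all add: left_diff_distrib integral_ball_measure_sgn_inner_zero)
qed

lemma integral_lhs_response_state:
  assumes H: "(a \<bullet> x)\<^sup>2 + 2 * norm (\<chi> i. T$i * x$i) \<le> 1" and x: "norm x = 1"
  shows "integrable ball_measure (\<lambda>l. lhs_response a T x b l *\<^sub>R lhs_state l)"
    and "(\<integral>l. lhs_response a T x b l *\<^sub>R lhs_state l \<partial>ball_measure) =
           assemblage (canon_state a T) (proj_meas x b)"
proof -
  let ?P = "lhs_response a T x b"
  have eq: "(\<lambda>l. ?P l *\<^sub>R lhs_state l) =
      (\<lambda>l. bloch (?P l / 2) (\<chi> i. ?P l * (sgn l \<bullet> axis i 1) / 2))"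
  proof -
    have "?P l *\<^sub>R (sgn l /\<^sub>R 2) = (\<chi> i. ?P l * (sgn l \<bullet> axis i 1) / 2)" for l
      by (simp add: vec_eq_iff inner_axis)
    then show ?thesis by (simp add: fun_eq_iff lhs_state_def scaleR_bloch)
  qed
  have f: "integrable ball_measure (\<lambda>l. ?P l / 2)"
    using integral_lhs_response(1)[OF H x] by simp
  have g: "integrable ball_measure (\<lambda>l. (\<chi> i. ?P l * (sgn l \<bullet> axis i 1) / 2) $ i)" for i
    using integral_lhs_response(2)[OF H x, of b "axis i 1"] by simp
  show "integrable ball_measure (\<lambda>l. ?P l *\<^sub>R lhs_state l)"
    unfolding eq by (rule integrable_bloch[OF f g])
  have "(\<integral>l. ?P l *\<^sub>R lhs_state l \<partial>ball_measure) =
      bloch (\<integral>l. ?P l / 2 \<partial>ball_measure) (\<chi> i. \<integral>l. ?P l * (sgn l \<bullet> axis i 1) / 2 \<partial>ball_measure)"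
    unfolding eq integral_bloch[OF f g] by simp
  also have "\<dots> = bloch ((1 + (if b then 1 else -1) * (a \<bullet> x)) / 4)
      (((if b then 1 else -1) / 4) *\<^sub>R (\<chi> i. T$i * x$i))"
  proof -
    have "(\<integral>l. ?P l / 2 \<partial>ball_measure) = (1 + (if b then 1 else -1) * (a \<bullet> x)) / 4"
      using integral_lhs_response(3)[OF H x, of b] by simp
    moreover have "(\<integral>l. ?P l * (sgn l \<bullet> axis i 1) / 2 \<partial>ball_measure) =
        (((if b then 1 else -1) / 4) *\<^sub>R (\<chi> i. T$i * x$i)) $ i" for i
      using integral_lhs_response(4)[OF H x, of b "axis i 1"] by (simp add: inner_axis)
    ultimately show ?thesis by (simp only: vec_lambda_eta)
  qed
  finally show "(\<integral>l. ?P l *\<^sub>R lhs_state l \<partial>ball_measure) =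
      assemblage (canon_state a T) (proj_meas x b)"
    by (simp add: assemblage_proj_meas)
qed

lemma LHS_model_proj_canon_state:
  assumes "\<And>x. norm x = 1 \<Longrightarrow> (a \<bullet> x)\<^sup>2 + 2 * norm (\<chi> i. T$i * x$i) \<le> 1"
  shows "LHS_model_proj ball_measure lhs_state (lhs_response a T) (canon_state a T)"
  unfolding LHS_model_proj_def
proof (intro conjI allI impI ballI)
  show "psd (lhs_state l)" for l by (rule psd_lhs_state)
  show "integrable ball_measure lhs_state" by (rule integral_lhs_state(1))
  show "(\<integral>l. trace (lhs_state l) \<partial>ball_measure) = 1"
    by (simp add: trace_lhs_state ball_measure.prob_space del: space_ball_measure)
  show "0 \<le> lhs_response a T x b l" for x b l
    using response_plus_bounds[OF assms, of x] by (auto simp: lhs_response_def)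
  show "lhs_response a T x True l + lhs_response a T x False l = 1" for x l
    by (simp add: lhs_response_def)
  show "integrable ball_measure (\<lambda>l. lhs_response a T x b l *\<^sub>R lhs_state l)" if "norm x = 1" for x b
    by (rule integral_lhs_response_state(1)[OF assms[OF that] that])
  show "assemblage (canon_state a T) (proj_meas x b) =
      (\<integral>l. lhs_response a T x b l *\<^sub>R lhs_state l \<partial>ball_measure)" if "norm x = 1" for x b
    by (rule integral_lhs_response_state(2)[OF assms[OF that] that, symmetric])
  show "assemblage (canon_state a T) (mat 1) = integral\<^sup>L ball_measure lhs_state"
    by (simp add: integral_lhs_state(2) assemblage_mat_1)
qed

theorem theorem1:
  fixes \<rho>0 :: qqop and a T :: "real^3"
  assumes "is_state \<rho>0"
    and "invertible (ptraceA \<rho>0)"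
    and "canonical_form_of \<rho>0 (canon_state a T)"
    and "\<forall>x::real^3. norm x = 1 \<longrightarrow>
           (a \<bullet> x)\<^sup>2 + 2 * norm (\<chi> i. T$i * x$i) \<le> 1"
  shows "unsteerable_proj (canon_state a T)"
  using LHS_model_proj_canon_state[of a T] assms(4) unfolding unsteerable_proj_def by blast

end
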